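(* In the standing setting described in the context, let $(\phi,\beta),(\psi,\alpha)\in\mathcal{A}\times\mathcal{B}$. Then $(G,\circ_{\phi,\beta})$ and $(G,\circ_{\psi,\alpha})$ are groups (with identity $1$; the inverse of $g$ in $(G,\circ_{\phi,\beta})$ is $\phi^{\uparrow}(g)^{-1}\, g^{-1}\,\phi^{\uparrow}(g)\,\beta(g,g)$ for any lifting $\phi^\uparrow$ of $\phi$), and $(G,\circ_{\phi,\beta},\circ_{\psi,\alpha})$ is a bi-skew brace. In other words, the family of operations $(\circ_{\phi,\beta} : (\phi,\beta)\in\mathcal{A}\times\mathcal{B})$ is a brace block on $G$.
   Context: Standing setting: $(G,\cdot)$ is a group, $K$ is a subgroup of $G$ contained in the centre $Z(G)$, and $A$ is a subgroup with $K\le A\le G$ and $A/K$ abelian. Let $\mathcal{A}=\{\psi\in\operatorname{End}(G/K):\psi(G/K)\le A/K\}$; it is a ring with $(\psi+\phi)(x)=\psi(x)\phi(x)$, $(-\psi)(x)=\psi(x)^{-1}$ and $(\psi\phi)(x)=\psi(\phi(x))$. A lifting of $\psi\in\mathcal{A}$ is any set map $\psi^{\uparrow}:G\to A$ with $\psi^{\uparrow}(g)K=\psi(gK)$ for all $g\in G$ (liftings need not be unique nor homomorphisms). Let $\mathcal{B}$ be the set of maps $\alpha:G\times G\to K$ that are bilinear, i.e. $\alpha(gh,k)=\alpha(g,k)\alpha(h,k)$ and $\alpha(g,hk)=\alpha(g,h)\alpha(g,k)$ for all $g,h,k\in G$, and satisfy $\alpha(k,g)=\alpha(g,k)=1$ for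 all $k\in K$, $g\in G$. For $(\psi,\alpha)\in\mathcal{A}\times\mathcal{B}$ define $g\circ_{\psi,\alpha}h=g\cdot\psi^{\uparrow}(g)\cdot h\cdot\psi^{\uparrow}(g)^{-1}\cdot\alpha(g,h)$, where $\psi^\uparrow$ is a lifting of $\psi$ (this does not depend on the choice of lifting). A skew brace is a triple $(G,\cdot,\circ)$ where $(G,\cdot)$ and $(G,\circ)$ are groups and $g\circ(h\cdot k)=(g\circ h)\cdot g^{-1}\cdot(g\circ k)$ for all $g,h,k$ ($g^{-1}$ the inverse for $\cdot$). A bi-skew brace is a triple $(G,\cdot,\circ)$ such that both $(G,\cdot,\circ)$ and $(G,\circ,\cdot)$ are skew braces. A brace block on a set $G$ is a family $\mathcal{F}$ of group operations on $G$ such that $(G,\circ,\diamond)$ is a bi-skew brace for all $\circ,\diamond\in\mathcal{F}$. *)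

theory Defs
  imports "HOL-Algebra.Algebra"
begin

definition central_subgroup :: "('a, 'b) monoid_scheme \<Rightarrow> 'a set \<Rightarrow> bool" where
  "central_subgroup G K \<longleftrightarrow> subgroup K G \<and>
     (\<forall>k\<in>K. \<forall>g\<in>carrier G. k \<otimes>\<^bsub>G\<^esub> g = g \<otimes>\<^bsub>G\<^esub> k)"

definition endA :: "('a, 'b) monoid_scheme \<Rightarrow> 'a set \<Rightarrow> 'a set \<Rightarrow> ('a set \<Rightarrow> 'a set) set" where
  "endA G K A = {\<psi>. \<psi> \<in> hom (G Mod K) (G Mod K) \<and>
      \<psi> ` carrier (G Mod K) \<subseteq> (\<lambda>a. K #>\<^bsub>G\<^esub> a) ` A}"

definition bilinB :: "('a, 'b) monoid_scheme \<Rightarrow> 'a set \<Rightarrow> ('a \<Rightarrow> 'a \<Rightarrow> 'a) set" where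
  "bilinB G K = {\<alpha>.
     (\<forall>g\<in>carrier G. \<forall>h\<in>carrier G. \<alpha> g h \<in> K) \<and>
     (\<forall>g\<in>carrier G. \<forall>h\<in>carrier G. \<forall>k\<in>carrier G.
        \<alpha> (g \<otimes>\<^bsub>G\<^esub> h) k = \<alpha> g k \<otimes>\<^bsub>G\<^esub> \<alpha> h k \<and>
        \<alpha> g (h \<otimes>\<^bsub>G\<^esub> k) = \<alpha> g h \<otimes>\<^bsub>G\<^esub> \<alpha> g k) \<and>
     (\<forall>k\<in>K. \<forall>g\<in>carrier G. \<alpha> k g = \<one>\<^bsub>G\<^esub> \<and> \<alpha> g k = \<one>\<^bsub>G\<^esub>)}"

definition is_lifting :: "('a, 'b) monoid_scheme \<Rightarrow> 'a set \<Rightarrow> 'a set \<Rightarrow> ('a set \<Rightarrow> 'a set) \<Rightarrow> ('a \<Rightarrow> 'a) \<Rightarrow> bool" where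
  "is_lifting G K A \<psi> f \<longleftrightarrow>
     (\<forall>g\<in>carrier G. f g \<in> A \<and> K #>\<^bsub>G\<^esub> f g = \<psi> (K #>\<^bsub>G\<^esub> g))"

text \<open>A chosen lifting (the operation does not depend on the choice).\<close>
definition lifting :: "('a, 'b) monoid_scheme \<Rightarrow> 'a set \<Rightarrow> 'a set \<Rightarrow> ('a set \<Rightarrow> 'a set) \<Rightarrow> 'a \<Rightarrow> 'a" where
  "lifting G K A \<psi> = (SOME f. is_lifting G K A \<psi> f)"

definition circ_op :: "('a, 'b) monoid_scheme \<Rightarrow> 'a set \<Rightarrow> 'a set \<Rightarrow> ('a set \<Rightarrow> 'a set) \<Rightarrow> ('a \<Rightarrow> 'a \<Rightarrow> 'a) \<Rightarrow> 'a \<Rightarrow> 'a \<Rightarrow> 'a" where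
  "circ_op G K A \<psi> \<alpha> g h =
     g \<otimes>\<^bsub>G\<^esub> lifting G K A \<psi> g \<otimes>\<^bsub>G\<^esub> h \<otimes>\<^bsub>G\<^esub> inv\<^bsub>G\<^esub> (lifting G K A \<psi> g) \<otimes>\<^bsub>G\<^esub> \<alpha> g h"

definition circ_struct :: "('a, 'b) monoid_scheme \<Rightarrow> 'a set \<Rightarrow> 'a set \<Rightarrow> ('a set \<Rightarrow> 'a set) \<Rightarrow> ('a \<Rightarrow> 'a \<Rightarrow> 'a) \<Rightarrow> 'a monoid" where
  "circ_struct G K A \<psi> \<alpha> =
     \<lparr>carrier = carrier G, monoid.mult = circ_op G K A \<psi> \<alpha>, monoid.one = \<one>\<^bsub>G\<^esub>\<rparr>"

definition skew_brace :: "'a monoid \<Rightarrow> 'a monoid \<Rightarrow> bool" where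
  "skew_brace D C \<longleftrightarrow> group D \<and> group C \<and> carrier C = carrier D \<and>
     (\<forall>g\<in>carrier D. \<forall>h\<in>carrier D. \<forall>k\<in>carrier D.
        g \<otimes>\<^bsub>C\<^esub> (h \<otimes>\<^bsub>D\<^esub> k) =
        (g \<otimes>\<^bsub>C\<^esub> h) \<otimes>\<^bsub>D\<^esub> inv\<^bsub>D\<^esub> g \<otimes>\<^bsub>D\<^esub> (g \<otimes>\<^bsub>C\<^esub> k))"

definition bi_skew_brace :: "'a monoid \<Rightarrow> 'a monoid \<Rightarrow> bool" where
  "bi_skew_brace D C \<longleftrightarrow> skew_brace D C \<and> skew_brace C D"

definition brace_block :: "'a set \<Rightarrow> 'a monoid set \<Rightarrow> bool" where
  "brace_block S F \<longleftrightarrow> (\<forall>C\<in>F. carrier C = S \<and> group C) \<and>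
     (\<forall>C\<in>F. \<forall>D\<in>F. bi_skew_brace C D)"

end

theory Submission
  imports Defs
begin

text \<open>
  Write \<open>g \<circ> h = g \<cdot> \<lambda>\<^sub>g h\<close> with \<open>\<lambda>\<^sub>g h = \<psi>\<up>(g) h \<psi>\<up>(g)\<inverse> \<alpha>(g,h)\<close>. Such a map, conjugation
  by an element of \<open>A\<close> followed by multiplication with a \<open>K\<close>-valued character, is called a
  twist here. As \<open>K\<close> is central, twists are endomorphisms of \<open>(G,\<cdot>)\<close>; as \<open>A/K\<close> is abelian and
  \<open>\<psi>\<up>\<close> is multiplicative modulo \<open>K\<close>, they are also endomorphisms of every \<open>(G,\<circ>)\<close> of the
  family, and \<open>\<lambda>\<^sub>g\<^sub>\<circ>\<^sub>h = \<lambda>\<^sub>g \<lambda>\<^sub>h\<close>, which gives associativity. For two operations the map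
  \<open>h \<mapsto> g\<inverse> \<circ>\<^sub>1 (g \<circ>\<^sub>2 h)\<close> is a composite of twists (the second one inverts \<open>\<lambda>\<^sub>g\<close> of \<open>\<circ>\<^sub>1\<close>),
  hence an endomorphism of \<open>(G,\<circ>\<^sub>1)\<close>; this is exactly the skew brace identity.
\<close>

lemma (in group) inv_mult_cancel_left [simp]:
  "x \<in> carrier G \<Longrightarrow> y \<in> carrier G \<Longrightarrow> inv x \<otimes> (x \<otimes> y) = y"
  and mult_inv_cancel_left [simp]:
  "x \<in> carrier G \<Longrightarrow> y \<in> carrier G \<Longrightarrow> x \<otimes> (inv x \<otimes> y) = y"
  by (simp_all add: m_assoc[symmetric])

locale central_setting = group G for G :: "('a, 'b) monoid_scheme" (structure) +
  fixes K A :: "'a set"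
  assumes central_subgroup: "central_subgroup G K"
    and subgroup_A: "subgroup A G"
    and abelian_quotient: "comm_group (G\<lparr>carrier := A\<rparr> Mod K)"
begin

lemma subgroup_K: "subgroup K G"
  using central_subgroup unfolding central_subgroup_def by blast

lemma central: "k \<in> K \<Longrightarrow> x \<in> carrier G \<Longrightarrow> k \<otimes> x = x \<otimes> k"
  using central_subgroup unfolding central_subgroup_def by blast

lemma K_carrier [simp]: "k \<in> K \<Longrightarrow> k \<in> carrier G"
  by (rule subgroup.mem_carrier[OF subgroup_K])

lemma A_carrier [simp]: "a \<in> A \<Longrightarrow> a \<in> carrier G"
  by (rule subgroup.mem_carrier[OF subgroup_A])

lemma K_closed [simp]:
  "k \<in> K \<Longrightarrow> l \<in> K \<Longrightarrow> k \<otimes> l \<in> K" "k \<in> K \<Longrightarrow> inv k \<in> K" "\<one> \<in> K"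
  using subgroup_K by (auto intro: subgroup.m_closed subgroup.m_inv_closed subgroup.one_closed)

lemma A_inv_closed [simp]: "a \<in> A \<Longrightarrow> inv a \<in> A"
  by (rule subgroup.m_inv_closed[OF subgroup_A])

lemma central_left_commute:
  "k \<in> K \<Longrightarrow> x \<in> carrier G \<Longrightarrow> y \<in> carrier G \<Longrightarrow> k \<otimes> (x \<otimes> y) = x \<otimes> (k \<otimes> y)"
  by (metis central K_carrier m_assoc)

lemma normal_K: "K \<lhd> G"
  unfolding normal_inv_iff
proof (intro conjI subgroup_K ballI)
  fix x k assume "x \<in> carrier G" "k \<in> K"
  then show "x \<otimes> k \<otimes> inv x \<in> K"
    by (simp add: central[symmetric] m_assoc)
qed

definition congK :: "'a \<Rightarrow> 'a \<Rightarrow> bool" where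
  "congK x y \<longleftrightarrow> x \<in> carrier G \<and> y \<in> carrier G \<and> K #> x = K #> y"

lemma congK_carrier: "congK x y \<Longrightarrow> x \<in> carrier G" "congK x y \<Longrightarrow> y \<in> carrier G"
  unfolding congK_def by auto

lemma congK_refl: "x \<in> carrier G \<Longrightarrow> congK x x"
  unfolding congK_def by simp

lemma congK_sym: "congK x y \<Longrightarrow> congK y x"
  unfolding congK_def by simp

lemma congK_trans [trans]: "congK x y \<Longrightarrow> congK y z \<Longrightarrow> congK x z"
  unfolding congK_def by simp

lemma congK_mult: "congK x x' \<Longrightarrow> congK y y' \<Longrightarrow> congK (x \<otimes> y) (x' \<otimes> y')"
  unfolding congK_def by (metis m_closed normal.rcos_sum[OF normal_K])

lemma congK_inv: "congK x y \<Longrightarrow> congK (inv x) (inv y)"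
  unfolding congK_def by (metis inv_closed normal.rcos_inv[OF normal_K])

lemma congK_mult_K: "x \<in> carrier G \<Longrightarrow> k \<in> K \<Longrightarrow> congK (x \<otimes> k) x"
  unfolding congK_def
  by (simp add: central[symmetric] coset_mult_assoc[symmetric] subgroup.subset[OF subgroup_K]
      subgroup.rcos_const[OF subgroup_K is_group])

lemma congK_E:
  assumes "congK x y" obtains k where "k \<in> K" "x = y \<otimes> k"
proof -
  have "x \<in> K #> y" using assms rcos_self[OF _ subgroup_K] unfolding congK_def by metis
  then obtain k where "k \<in> K" "x = k \<otimes> y" unfolding r_coset_def by blast
  with that show ?thesis using assms central congK_carrier by metis
qed

lemma A_commute_mod_K: "a \<in> A \<Longrightarrow> b \<in> A \<Longrightarrow> congK (a \<otimes> b) (b \<otimes> a)"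
proof -
  assume ab: "a \<in> A" "b \<in> A"
  interpret Q: comm_group "G\<lparr>carrier := A\<rparr> Mod K" by (rule abelian_quotient)
  have "K #> a \<in> carrier (G\<lparr>carrier := A\<rparr> Mod K)" "K #> b \<in> carrier (G\<lparr>carrier := A\<rparr> Mod K)"
    using ab by (auto simp: FactGroup_def RCOSETS_def r_coset_def)
  then have "(K #> a) <#> (K #> b) = (K #> b) <#> (K #> a)"
    using Q.m_comm by (simp add: FactGroup_def set_mult_def)
  then show ?thesis
    using ab by (simp add: congK_def normal.rcos_sum[OF normal_K])
qed

definition conjugate :: "'a \<Rightarrow> 'a \<Rightarrow> 'a" where
  "conjugate a x = a \<otimes> x \<otimes> inv a"

lemma conjugate_closed [simp]: "a \<in> carrier G \<Longrightarrow> x \<in> carrier G \<Longrightarrow> conjugate a x \<in> carrier G"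
  unfolding conjugate_def by simp

lemma conjugate_mult:
  "a \<in> carrier G \<Longrightarrow> x \<in> carrier G \<Longrightarrow> y \<in> carrier G \<Longrightarrow>
    conjugate a (x \<otimes> y) = conjugate a x \<otimes> conjugate a y"
  unfolding conjugate_def by (simp add: m_assoc)

lemma conjugate_conjugate:
  "a \<in> carrier G \<Longrightarrow> b \<in> carrier G \<Longrightarrow> x \<in> carrier G \<Longrightarrow>
    conjugate a (conjugate b x) = conjugate (a \<otimes> b) x"
  unfolding conjugate_def by (simp add: m_assoc inv_mult_group)

lemma conjugate_one [simp]: "x \<in> carrier G \<Longrightarrow> conjugate \<one> x = x"
  unfolding conjugate_def by simp

lemma conjugate_K [simp]: "a \<in> carrier G \<Longrightarrow> k \<in> K \<Longrightarrow> conjugate a k = k"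
  unfolding conjugate_def by (simp add: m_assoc central_left_commute[of k a "inv a", symmetric])

lemma conjugate_congK: "congK a b \<Longrightarrow> x \<in> carrier G \<Longrightarrow> conjugate a x = conjugate b x"
proof -
  assume "congK a b" "x \<in> carrier G"
  moreover obtain k where "k \<in> K" "a = b \<otimes> k" using \<open>congK a b\<close> by (rule congK_E)
  ultimately show ?thesis
    using congK_carrier
    by (simp add: conjugate_def inv_mult_group m_assoc central_left_commute[of k])
qed

definition K_character :: "('a \<Rightarrow> 'a) \<Rightarrow> bool" where
  "K_character \<delta> \<longleftrightarrow> (\<forall>x\<in>carrier G. \<delta> x \<in> K) \<and>
     (\<forall>x\<in>carrier G. \<forall>y\<in>carrier G. \<delta> (x \<otimes> y) = \<delta> x \<otimes> \<delta> y) \<and> (\<forall>k\<in>K. \<delta> k = \<one>)"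

context
  fixes \<delta> assumes \<delta>: "K_character \<delta>"
begin

lemma K_character_mem [simp]: "x \<in> carrier G \<Longrightarrow> \<delta> x \<in> K"
  and K_character_mult: "x \<in> carrier G \<Longrightarrow> y \<in> carrier G \<Longrightarrow> \<delta> (x \<otimes> y) = \<delta> x \<otimes> \<delta> y"
  and K_character_K [simp]: "k \<in> K \<Longrightarrow> \<delta> k = \<one>"
  using \<delta> unfolding K_character_def by blast+

lemma K_character_inv: "x \<in> carrier G \<Longrightarrow> \<delta> (inv x) = inv (\<delta> x)"
proof -
  assume x: "x \<in> carrier G"
  then have "\<delta> x \<otimes> \<delta> (inv x) = \<one>"
    by (simp add: K_character_mult[symmetric])
  then show ?thesis using x by (metis inv_closed inv_comm inv_equality K_character_mem K_carrier)
qed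

lemma K_character_mult_K [simp]: "x \<in> carrier G \<Longrightarrow> k \<in> K \<Longrightarrow> \<delta> (x \<otimes> k) = \<delta> x"
  by (simp add: K_character_mult)

lemma K_character_conjugate [simp]:
  "a \<in> carrier G \<Longrightarrow> x \<in> carrier G \<Longrightarrow> \<delta> (conjugate a x) = \<delta> x"
  unfolding conjugate_def
  by (simp add: K_character_mult K_character_inv m_assoc central_left_commute[of "\<delta> a"])

lemma K_character_inverse: "K_character (\<lambda>x. inv (\<delta> x))"
  unfolding K_character_def
  by (simp add: K_character_mult inv_mult_group central)

end

lemma bilinB_K_character_left: "\<gamma> \<in> bilinB G K \<Longrightarrow> h \<in> carrier G \<Longrightarrow> K_character (\<lambda>g. \<gamma> g h)"
  and bilinB_K_character_right: "\<gamma> \<in> bilinB G K \<Longrightarrow> g \<in> carrier G \<Longrightarrow> K_character (\<gamma> g)"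
  unfolding bilinB_def K_character_def by auto

definition twist :: "'a \<Rightarrow> ('a \<Rightarrow> 'a) \<Rightarrow> 'a \<Rightarrow> 'a" where
  "twist c \<delta> z = conjugate c z \<otimes> \<delta> z"

lemma twist_closed [simp]:
  "c \<in> carrier G \<Longrightarrow> K_character \<delta> \<Longrightarrow> z \<in> carrier G \<Longrightarrow> twist c \<delta> z \<in> carrier G"
  unfolding twist_def by simp

lemma twist_congK: "congK (twist c \<delta> z) (conjugate c z)"
  if "c \<in> carrier G" "K_character \<delta>" "z \<in> carrier G"
  unfolding twist_def using that by (simp add: congK_mult_K)

lemma twist_mult:
  assumes "c \<in> carrier G" "K_character \<delta>" "x \<in> carrier G" "y \<in> carrier G"
  shows "twist c \<delta> (x \<otimes> y) = twist c \<delta> x \<otimes> twist c \<delta> y"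
  using assms
  by (simp add: twist_def conjugate_mult K_character_mult m_assoc central_left_commute[of "\<delta> x"])

lemma twist_twist:
  assumes "c \<in> carrier G" "c' \<in> carrier G" "K_character \<delta>" "K_character \<delta>'" "z \<in> carrier G"
  shows "twist c \<delta> (twist c' \<delta>' z) = twist (c \<otimes> c') (\<lambda>z. \<delta>' z \<otimes> \<delta> z) z"
  using assms
  by (simp add: twist_def conjugate_mult conjugate_conjugate K_character_mult m_assoc)

lemma twist_cong:
  "congK c c' \<Longrightarrow> \<delta> z = \<delta>' z \<Longrightarrow> z \<in> carrier G \<Longrightarrow> twist c \<delta> z = twist c' \<delta>' z"
  unfolding twist_def by (simp add: conjugate_congK)

lemma twist_trivial [simp]: "z \<in> carrier G \<Longrightarrow> twist \<one> (\<lambda>_. \<one>) z = z"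
  unfolding twist_def by simp

lemma K_character_twist:
  "K_character \<delta>' \<Longrightarrow> c \<in> carrier G \<Longrightarrow> K_character \<delta> \<Longrightarrow> z \<in> carrier G \<Longrightarrow>
    \<delta>' (twist c \<delta> z) = \<delta>' z"
  unfolding twist_def by simp

context
  fixes \<chi> f assumes \<chi>: "\<chi> \<in> endA G K A" and f: "is_lifting G K A \<chi> f"
begin

lemma lifting_mem_A [simp]: "g \<in> carrier G \<Longrightarrow> f g \<in> A"
  and lifting_coset: "g \<in> carrier G \<Longrightarrow> K #> f g = \<chi> (K #> g)"
  using f unfolding is_lifting_def by blast+

lemma lifting_mult: "x \<in> carrier G \<Longrightarrow> y \<in> carrier G \<Longrightarrow> congK (f (x \<otimes> y)) (f x \<otimes> f y)"
proof -
  assume xy: "x \<in> carrier G" "y \<in> carrier G"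
  have hom: "\<chi> \<in> hom (G Mod K) (G Mod K)" using \<chi> unfolding endA_def by blast
  have "K #> f (x \<otimes> y) = \<chi> ((K #> x) <#> (K #> y))"
    using xy by (simp add: lifting_coset normal.rcos_sum[OF normal_K])
  also have "\<dots> = \<chi> (K #> x) <#> \<chi> (K #> y)"
    using hom_mult[OF hom] xy by (simp add: carrier_FactGroup)
  also have "\<dots> = K #> (f x \<otimes> f y)"
    using xy by (simp add: lifting_coset[symmetric] normal.rcos_sum[OF normal_K])
  finally show ?thesis using xy by (simp add: congK_def)
qed

lemma lifting_one: "congK (f \<one>) \<one>"
proof -
  have hom: "\<chi> \<in> hom (G Mod K) (G Mod K)" using \<chi> unfolding endA_def by blast
  have grp: "group (G Mod K)" by (rule normal.factorgroup_is_group[OF normal_K])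
  have "K #> f \<one> = \<chi> K"
    by (simp add: lifting_coset coset_join2 subgroup_K)
  also have "\<dots> = K #> \<one>"
    using hom_one[OF hom grp grp] by (simp add: coset_join2 subgroup_K)
  finally show ?thesis by (simp add: congK_def)
qed

lemma lifting_inv: "x \<in> carrier G \<Longrightarrow> congK (f (inv x)) (inv (f x))"
proof -
  assume x: "x \<in> carrier G"
  have "congK (f x \<otimes> f (inv x)) \<one>"
    using lifting_mult[of x "inv x"] lifting_one x by (auto intro: congK_trans congK_sym)
  then have "congK (inv (f x) \<otimes> (f x \<otimes> f (inv x))) (inv (f x) \<otimes> \<one>)"
    using x by (intro congK_mult congK_refl) auto
  then show ?thesis using x by simp
qed

lemma lifting_congK: "congK x y \<Longrightarrow> congK (f x) (f y)"
  by (simp add: congK_def lifting_coset)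

lemma lifting_conjugate: "a \<in> carrier G \<Longrightarrow> x \<in> carrier G \<Longrightarrow> congK (f (conjugate a x)) (f x)"
proof -
  assume ax: "a \<in> carrier G" "x \<in> carrier G"
  have "congK (f (conjugate a x)) (f a \<otimes> f x \<otimes> inv (f a))"
    unfolding conjugate_def using ax
    by (meson congK_trans congK_mult congK_refl lifting_mult lifting_inv m_closed inv_closed)
  also have "congK (f a \<otimes> f x \<otimes> inv (f a)) (f x \<otimes> f a \<otimes> inv (f a))"
    using ax by (intro congK_mult A_commute_mod_K congK_refl) auto
  finally show ?thesis using ax by (simp add: m_assoc)
qed

lemma lifting_twist:
  "c \<in> carrier G \<Longrightarrow> K_character \<delta> \<Longrightarrow> z \<in> carrier G \<Longrightarrow> congK (f (twist c \<delta> z)) (f z)"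
  by (meson congK_trans lifting_congK twist_congK lifting_conjugate)

end

lemma liftings_congK:
  "is_lifting G K A \<chi> f \<Longrightarrow> is_lifting G K A \<chi> f' \<Longrightarrow> g \<in> carrier G \<Longrightarrow> congK (f g) (f' g)"
  unfolding is_lifting_def congK_def by simp

lemma lifting_is_lifting:
  assumes "\<chi> \<in> endA G K A" shows "is_lifting G K A \<chi> (lifting G K A \<chi>)"
proof -
  have "\<exists>a. a \<in> A \<and> K #> a = \<chi> (K #> g)" if "g \<in> carrier G" for g
  proof -
    have "K #> g \<in> carrier (G Mod K)" using that by (simp add: carrier_FactGroup)
    then have "\<chi> (K #> g) \<in> (\<lambda>a. K #> a) ` A" using assms unfolding endA_def by blast
    then show ?thesis by (auto simp: eq_commute)
  qed
  then obtain f where "\<forall>g\<in>carrier G. f g \<in> A \<and> K #> f g = \<chi> (K #> g)"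
    by metis
  then have "is_lifting G K A \<chi> f" unfolding is_lifting_def by blast
  then show ?thesis unfolding lifting_def by (rule someI[of "is_lifting G K A \<chi>"])
qed

abbreviation lift :: "('a set \<Rightarrow> 'a set) \<Rightarrow> 'a \<Rightarrow> 'a" where
  "lift \<chi> \<equiv> lifting G K A \<chi>"

abbreviation circ :: "('a set \<Rightarrow> 'a set) \<Rightarrow> ('a \<Rightarrow> 'a \<Rightarrow> 'a) \<Rightarrow> 'a \<Rightarrow> 'a \<Rightarrow> 'a" where
  "circ \<chi> \<gamma> \<equiv> circ_op G K A \<chi> \<gamma>"

context
  fixes \<chi> \<gamma> assumes \<chi>: "\<chi> \<in> endA G K A" and \<gamma>: "\<gamma> \<in> bilinB G K"
begin

lemma lift_mem_A [simp]: "g \<in> carrier G \<Longrightarrow> lift \<chi> g \<in> A"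
  using lifting_mem_A[OF \<chi> lifting_is_lifting[OF \<chi>]] .

lemma bilin_mem_K [simp]: "g \<in> carrier G \<Longrightarrow> h \<in> carrier G \<Longrightarrow> \<gamma> g h \<in> K"
  using \<gamma> unfolding bilinB_def by blast

lemma circ_op_twist:
  "g \<in> carrier G \<Longrightarrow> h \<in> carrier G \<Longrightarrow> circ \<chi> \<gamma> g h = g \<otimes> twist (lift \<chi> g) (\<gamma> g) h"
  unfolding circ_op_def twist_def conjugate_def by (simp add: m_assoc)

lemma circ_op_closed [simp]: "g \<in> carrier G \<Longrightarrow> h \<in> carrier G \<Longrightarrow> circ \<chi> \<gamma> g h \<in> carrier G"
  by (simp add: circ_op_twist bilinB_K_character_right[OF \<gamma>])

lemma twist_circ_op:
  assumes xyz: "x \<in> carrier G" "y \<in> carrier G" "z \<in> carrier G"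
  shows "twist (lift \<chi> (circ \<chi> \<gamma> x y)) (\<gamma> (circ \<chi> \<gamma> x y)) z =
    twist (lift \<chi> x) (\<gamma> x) (twist (lift \<chi> y) (\<gamma> y) z)"
proof -
  note f = lifting_is_lifting[OF \<chi>]
  note \<gamma>x = bilinB_K_character_right[OF \<gamma> xyz(1)] and \<gamma>y = bilinB_K_character_right[OF \<gamma> xyz(2)]
  note \<gamma>z = bilinB_K_character_left[OF \<gamma> xyz(3)]
  have "congK (lift \<chi> (circ \<chi> \<gamma> x y)) (lift \<chi> x \<otimes> lift \<chi> (twist (lift \<chi> x) (\<gamma> x) y))"
    using xyz \<gamma>x by (simp add: circ_op_twist lifting_mult[OF \<chi> f])
  also have "congK \<dots> (lift \<chi> x \<otimes> lift \<chi> y)"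
    using xyz \<gamma>x by (intro congK_mult congK_refl lifting_twist[OF \<chi> f]) auto
  finally have lift_circ: "congK (lift \<chi> (circ \<chi> \<gamma> x y)) (lift \<chi> x \<otimes> lift \<chi> y)" .
  have "\<gamma> (circ \<chi> \<gamma> x y) z = \<gamma> x z \<otimes> \<gamma> y z"
    using xyz \<gamma>x
    by (simp add: circ_op_twist K_character_mult[OF \<gamma>z] K_character_twist[OF \<gamma>z])
  also have "\<dots> = \<gamma> y z \<otimes> \<gamma> x z"
    using xyz by (simp add: central)
  finally show ?thesis
    using xyz \<gamma>x \<gamma>y by (simp add: twist_twist twist_cong[OF lift_circ])
qed

lemma circ_op_assoc:
  assumes "x \<in> carrier G" "y \<in> carrier G" "z \<in> carrier G"
  shows "circ \<chi> \<gamma> (circ \<chi> \<gamma> x y) z = circ \<chi> \<gamma> x (circ \<chi> \<gamma> y z)"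
  using assms bilinB_K_character_right[OF \<gamma>]
  by (simp add: circ_op_twist[of "circ \<chi> \<gamma> x y"] twist_circ_op)
    (simp add: circ_op_twist twist_mult m_assoc)

lemma circ_op_one_left: "h \<in> carrier G \<Longrightarrow> circ \<chi> \<gamma> \<one> h = h"
proof -
  assume h: "h \<in> carrier G"
  have "\<gamma> \<one> h = \<one>"
    using K_character_K[OF bilinB_K_character_left[OF \<gamma> h]] by simp
  then show ?thesis
    using h lifting_one[OF \<chi> lifting_is_lifting[OF \<chi>]]
    by (simp add: circ_op_twist twist_cong[where c' = \<one> and \<delta>' = "\<lambda>_. \<one>"])
qed

lemma circ_op_inverse:
  assumes f: "is_lifting G K A \<chi> f" and g: "g \<in> carrier G"
  shows "circ \<chi> \<gamma> (inv (f g) \<otimes> inv g \<otimes> f g \<otimes> \<gamma> g g) g = \<one>"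
proof -
  define a where "a = f g"
  have a: "a \<in> carrier G" unfolding a_def using lifting_mem_A[OF \<chi> f g] by simp
  define g' where "g' = conjugate (inv a) (inv g)"
  have g': "g' \<in> carrier G" unfolding g'_def using a g by simp
  have lift_g': "congK (lift \<chi> (g' \<otimes> \<gamma> g g)) (inv a)"
  proof -
    note f' = lifting_is_lifting[OF \<chi>]
    have "congK (lift \<chi> (g' \<otimes> \<gamma> g g)) (lift \<chi> g')"
      using g g' by (intro lifting_congK[OF \<chi> f'] congK_mult_K) auto
    also have "congK (lift \<chi> g') (lift \<chi> (inv g))"
      unfolding g'_def using a g by (intro lifting_conjugate[OF \<chi> f']) auto
    also have "congK (lift \<chi> (inv g)) (inv (lift \<chi> g))"
      using g by (rule lifting_inv[OF \<chi> f'])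
    also have "congK (inv (lift \<chi> g)) (inv a)"
      unfolding a_def using g by (intro congK_inv liftings_congK[OF f' f])
    finally show ?thesis .
  qed
  have \<gamma>_g': "\<gamma> (g' \<otimes> \<gamma> g g) g = inv (\<gamma> g g)"
    using a g g' unfolding g'_def
    by (simp add: K_character_mult_K[OF bilinB_K_character_left[OF \<gamma> g]]
        K_character_conjugate[OF bilinB_K_character_left[OF \<gamma> g]]
        K_character_inv[OF bilinB_K_character_left[OF \<gamma> g]])
  have "inv a \<otimes> inv g \<otimes> a \<otimes> \<gamma> g g = g' \<otimes> \<gamma> g g"
    unfolding g'_def conjugate_def using a g by simp
  then have "circ \<chi> \<gamma> (inv a \<otimes> inv g \<otimes> a \<otimes> \<gamma> g g) g =
      g' \<otimes> \<gamma> g g \<otimes> (conjugate (inv a) g \<otimes> inv (\<gamma> g g))"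
    using g g' lift_g' \<gamma>_g' by (simp add: circ_op_twist twist_def conjugate_congK)
  also have "\<dots> = g' \<otimes> conjugate (inv a) g"
    using a g g' by (simp add: m_assoc central_left_commute[of "\<gamma> g g"])
  also have "\<dots> = \<one>"
    unfolding g'_def using a g by (simp add: conjugate_mult[symmetric])
  finally show ?thesis unfolding a_def .
qed

lemma group_circ_struct: "group (circ_struct G K A \<chi> \<gamma>)"
proof (rule groupI)
  fix x assume "x \<in> carrier (circ_struct G K A \<chi> \<gamma>)"
  then have x: "x \<in> carrier G" by (simp add: circ_struct_def)
  let ?f = "lift \<chi>"
  have "inv (?f x) \<otimes> inv x \<otimes> ?f x \<otimes> \<gamma> x x \<in> carrier G"
    using x lift_mem_A by simp
  then show "\<exists>y\<in>carrier (circ_struct G K A \<chi> \<gamma>). y \<otimes>\<^bsub>circ_struct G K A \<chi> \<gamma>\<^esub> x = \<one>\<^bsub>circ_struct G K A \<chi> \<gamma>\<^esub>"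
    using circ_op_inverse[OF lifting_is_lifting[OF \<chi>] x] by (auto simp: circ_struct_def)
qed (simp_all add: circ_struct_def circ_op_assoc circ_op_one_left)

lemma circ_struct_inv:
  assumes f: "is_lifting G K A \<chi> f" and g: "g \<in> carrier G"
  shows "inv\<^bsub>circ_struct G K A \<chi> \<gamma>\<^esub> g = inv (f g) \<otimes> inv g \<otimes> f g \<otimes> \<gamma> g g"
proof -
  interpret S: group "circ_struct G K A \<chi> \<gamma>" by (rule group_circ_struct)
  show ?thesis
    using g lifting_mem_A[OF \<chi> f g]
    by (intro S.inv_equality) (simp_all add: circ_struct_def circ_op_inverse[OF f])
qed

lemma twist_circ_op_hom:
  assumes c: "c \<in> A" and \<delta>: "K_character \<delta>" and xy: "x \<in> carrier G" "y \<in> carrier G"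
  shows "twist c \<delta> (circ \<chi> \<gamma> x y) = circ \<chi> \<gamma> (twist c \<delta> x) (twist c \<delta> y)"
proof -
  note f = lifting_is_lifting[OF \<chi>]
  let ?x' = "twist c \<delta> x"
  have x': "?x' \<in> carrier G" using c \<delta> xy by simp
  note \<gamma>x = bilinB_K_character_right[OF \<gamma> xy(1)] and \<gamma>x' = bilinB_K_character_right[OF \<gamma> x']
  have "congK (c \<otimes> lift \<chi> x) (lift \<chi> x \<otimes> c)"
    using c xy by (simp add: A_commute_mod_K)
  also have "congK (lift \<chi> x \<otimes> c) (lift \<chi> ?x' \<otimes> c)"
    using c \<delta> xy by (intro congK_mult congK_refl congK_sym[OF lifting_twist[OF \<chi> f]]) auto
  finally have lift_x': "congK (c \<otimes> lift \<chi> x) (lift \<chi> ?x' \<otimes> c)" .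
  have "\<gamma> x y \<otimes> \<delta> y = \<delta> y \<otimes> \<gamma> ?x' y"
    using c \<delta> xy
    by (simp add: central K_character_twist[OF bilinB_K_character_left[OF \<gamma> xy(2)]])
  then have "twist c \<delta> (twist (lift \<chi> x) (\<gamma> x) y) = twist (lift \<chi> ?x') (\<gamma> ?x') (twist c \<delta> y)"
    using c \<delta> xy x' \<gamma>x \<gamma>x' by (simp add: twist_twist twist_cong[OF lift_x'])
  then show ?thesis
    using c \<delta> xy \<gamma>x by (simp add: circ_op_twist twist_mult)
qed

lemma circ_op_untwist:
  assumes "g \<in> carrier G" "w \<in> carrier G"
  shows "circ \<chi> \<gamma> g (twist (inv (lift \<chi> g)) (\<lambda>z. inv (\<gamma> g z)) w) = g \<otimes> w"
proof -
  note \<gamma>g = bilinB_K_character_right[OF \<gamma> assms(1)]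
  have "twist (lift \<chi> g) (\<gamma> g) (twist (inv (lift \<chi> g)) (\<lambda>z. inv (\<gamma> g z)) w) =
      twist (lift \<chi> g \<otimes> inv (lift \<chi> g)) (\<lambda>z. inv (\<gamma> g z) \<otimes> \<gamma> g z) w"
    using assms \<gamma>g K_character_inverse[OF \<gamma>g] by (intro twist_twist) auto
  also have "\<dots> = twist \<one> (\<lambda>_. \<one>) w"
    using assms \<gamma>g by (intro twist_cong) (simp_all add: congK_refl)
  also have "\<dots> = w"
    using assms by simp
  finally show ?thesis
    using assms \<gamma>g K_character_inverse[OF \<gamma>g] by (simp add: circ_op_twist)
qed

end

lemma skew_brace_circ_struct:
  assumes \<chi>1: "\<chi>1 \<in> endA G K A" and \<gamma>1: "\<gamma>1 \<in> bilinB G K"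
    and \<chi>2: "\<chi>2 \<in> endA G K A" and \<gamma>2: "\<gamma>2 \<in> bilinB G K"
  shows "skew_brace (circ_struct G K A \<chi>1 \<gamma>1) (circ_struct G K A \<chi>2 \<gamma>2)"
  unfolding skew_brace_def
proof (intro conjI group_circ_struct[OF \<chi>1 \<gamma>1] group_circ_struct[OF \<chi>2 \<gamma>2] ballI)
  let ?S = "circ_struct G K A \<chi>1 \<gamma>1"
  interpret S: group ?S by (rule group_circ_struct[OF \<chi>1 \<gamma>1])
  have carrier_S: "carrier ?S = carrier G"
    by (simp add: circ_struct_def)
  show "carrier (circ_struct G K A \<chi>2 \<gamma>2) = carrier ?S"
    by (simp add: circ_struct_def)
  fix g h k assume "g \<in> carrier ?S" "h \<in> carrier ?S" "k \<in> carrier ?S"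
  then have g: "g \<in> carrier G" and hk: "h \<in> carrier G" "k \<in> carrier G"
    by (simp_all add: carrier_S)
  note \<delta>1 = K_character_inverse[OF bilinB_K_character_right[OF \<gamma>1 g]]
  note \<delta>2 = bilinB_K_character_right[OF \<gamma>2 g]
  note c1 = A_inv_closed[OF lift_mem_A[OF \<chi>1 \<gamma>1 g]] and c2 = lift_mem_A[OF \<chi>2 \<gamma>2 g]
  define \<tau> where "\<tau> w = twist (inv (lift \<chi>1 g)) (\<lambda>z. inv (\<gamma>1 g z)) (twist (lift \<chi>2 g) (\<gamma>2 g) w)" for w
  have \<tau>_closed: "\<tau> w \<in> carrier G" if "w \<in> carrier G" for w
    unfolding \<tau>_def using that \<delta>1 \<delta>2 c1 c2 by simp
  have circ2: "circ \<chi>2 \<gamma>2 g w = circ \<chi>1 \<gamma>1 g (\<tau> w)" if "w \<in> carrier G" for w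
    unfolding \<tau>_def using that g \<delta>2 c2
    by (simp add: circ_op_twist[OF \<chi>2 \<gamma>2] circ_op_untwist[OF \<chi>1 \<gamma>1])
  have "\<tau> (circ \<chi>1 \<gamma>1 h k) = circ \<chi>1 \<gamma>1 (\<tau> h) (\<tau> k)"
    unfolding \<tau>_def using hk \<delta>1 \<delta>2 c1 c2
    by (simp add: twist_circ_op_hom[OF \<chi>1 \<gamma>1])
  then have "circ \<chi>2 \<gamma>2 g (circ \<chi>1 \<gamma>1 h k) = g \<otimes>\<^bsub>?S\<^esub> (\<tau> h \<otimes>\<^bsub>?S\<^esub> \<tau> k)"
    using g hk by (simp add: circ2 circ_op_closed[OF \<chi>1 \<gamma>1] circ_struct_def)
  also have "\<dots> = g \<otimes>\<^bsub>?S\<^esub> \<tau> h \<otimes>\<^bsub>?S\<^esub> inv\<^bsub>?S\<^esub> g \<otimes>\<^bsub>?S\<^esub> (g \<otimes>\<^bsub>?S\<^esub> \<tau> k)"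
  proof -
    have "g \<in> carrier ?S" "\<tau> h \<in> carrier ?S" "\<tau> k \<in> carrier ?S"
      using g hk \<tau>_closed by (simp_all add: carrier_S)
    then show ?thesis by (simp add: S.m_assoc)
  qed
  finally show "g \<otimes>\<^bsub>circ_struct G K A \<chi>2 \<gamma>2\<^esub> (h \<otimes>\<^bsub>?S\<^esub> k) =
      g \<otimes>\<^bsub>circ_struct G K A \<chi>2 \<gamma>2\<^esub> h \<otimes>\<^bsub>?S\<^esub> inv\<^bsub>?S\<^esub> g \<otimes>\<^bsub>?S\<^esub> (g \<otimes>\<^bsub>circ_struct G K A \<chi>2 \<gamma>2\<^esub> k)"
    using g hk by (simp add: circ2 circ_struct_def)
qed

end

theorem mainTheorem1:
  fixes G :: "('a, 'b) monoid_scheme" and K A :: "'a set"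
    and \<phi> \<psi> :: "'a set \<Rightarrow> 'a set" and \<beta> \<alpha> :: "'a \<Rightarrow> 'a \<Rightarrow> 'a"
  assumes "group G"
    and "central_subgroup G K"
    and "subgroup A G" and "K \<subseteq> A"
    and "comm_group (G\<lparr>carrier := A\<rparr> Mod K)"
    and "\<phi> \<in> endA G K A" and "\<beta> \<in> bilinB G K"
    and "\<psi> \<in> endA G K A" and "\<alpha> \<in> bilinB G K"
  shows "group (circ_struct G K A \<phi> \<beta>) \<and> group (circ_struct G K A \<psi> \<alpha>)
    \<and> one (circ_struct G K A \<phi> \<beta>) = \<one>\<^bsub>G\<^esub>
    \<and> (\<forall>f. is_lifting G K A \<phi> f \<longrightarrow> (\<forall>g\<in>carrier G.
          inv\<^bsub>circ_struct G K A \<phi> \<beta>\<^esub> g =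
          inv\<^bsub>G\<^esub> (f g) \<otimes>\<^bsub>G\<^esub> inv\<^bsub>G\<^esub> g \<otimes>\<^bsub>G\<^esub> f g \<otimes>\<^bsub>G\<^esub> \<beta> g g))
    \<and> bi_skew_brace (circ_struct G K A \<phi> \<beta>) (circ_struct G K A \<psi> \<alpha>)
    \<and> brace_block (carrier G) {circ_struct G K A \<chi> \<gamma> | \<chi> \<gamma>. \<chi> \<in> endA G K A \<and> \<gamma> \<in> bilinB G K}"
proof -
  interpret central_setting G K A
    using assms(1-3,5) by (simp add: central_setting_def central_setting_axioms_def)
  have "carrier (circ_struct G K A \<chi> \<gamma>) = carrier G" "\<one>\<^bsub>circ_struct G K A \<chi> \<gamma>\<^esub> = \<one>\<^bsub>G\<^esub>" for \<chi> \<gamma>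
    by (simp_all add: circ_struct_def)
  then show ?thesis
    unfolding bi_skew_brace_def brace_block_def
    using assms group_circ_struct skew_brace_circ_struct circ_struct_inv by auto
qed

end
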